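(* Let $n\geq 4$ and $m\geq 1$ be integers, let $K$ be an infinite field, and let $p(x_1,\ldots,x_m)\in K\langle x_1,\ldots,x_m\rangle$ be a noncommutative polynomial with zero constant term such that $\mathrm{ord}(p)=n-2$. Then $p(T_n(K))=T_n(K)^{(n-3)}$.
   Context: $T_n(K)$ denotes the algebra of $n\times n$ upper triangular matrices over $K$; $T_n(K)^{(t)}$ denotes the set of upper triangular matrices whose $(i,j)$ entries vanish whenever $j-i\leq t$ (so $T_n(K)^{(n-3)}$ consists of the matrices supported on the positions $(1,n-1),(2,n),(1,n)$). $p(T_n(K))=\{p(a_1,\ldots,a_m):a_i\in T_n(K)\}$. The order $\mathrm{ord}(p)$ is the least positive integer $r$ with $p(T_r(K))=\{0\}$ but $p(T_{r+1}(K))\neq\{0\}$ (with $T_1(K)=K$). *)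

theory Defs
  imports Main
begin

text \<open>Square matrices of variable size r are represented as functions
  nat => nat => 'a (0-indexed), required to vanish outside {0..<r} x {0..<r}.\<close>

type_synonym 'a sqmat = "nat \<Rightarrow> nat \<Rightarrow> 'a"

definition mat_mul :: "nat \<Rightarrow> 'a::comm_ring_1 sqmat \<Rightarrow> 'a sqmat \<Rightarrow> 'a sqmat" where
  "mat_mul r A B = (\<lambda>i j. if i < r \<and> j < r then (\<Sum>k<r. A i k * B k j) else 0)"

definition mat_one :: "nat \<Rightarrow> 'a::comm_ring_1 sqmat" where
  "mat_one r = (\<lambda>i j. if i < r \<and> j < r \<and> i = j then 1 else 0)"

definition mat_zero :: "'a::comm_ring_1 sqmat" where
  "mat_zero = (\<lambda>i j. 0)"

definition upper_tri :: "nat \<Rightarrow> 'a::comm_ring_1 sqmat set" where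
  "upper_tri r = {A. \<forall>i j. (r \<le> i \<or> r \<le> j \<or> j < i) \<longrightarrow> A i j = 0}"

definition upper_tri_t :: "nat \<Rightarrow> nat \<Rightarrow> 'a::comm_ring_1 sqmat set" where
  "upper_tri_t r t = {A \<in> upper_tri r. \<forall>i j. j \<le> i + t \<longrightarrow> A i j = 0}"

text \<open>Noncommutative polynomials in K<x_0,...,x_(m-1)>: a coefficient function on
  words (lists of variable indices) with finite support, all letters < m.\<close>
definition nc_poly :: "nat \<Rightarrow> (nat list \<Rightarrow> 'a::comm_ring_1) \<Rightarrow> bool" where
  "nc_poly m c \<longleftrightarrow> finite {w. c w \<noteq> 0} \<and> (\<forall>w. c w \<noteq> 0 \<longrightarrow> (\<forall>x\<in>set w. x < m))"

fun word_eval :: "nat \<Rightarrow> (nat \<Rightarrow> 'a::comm_ring_1 sqmat) \<Rightarrow> nat list \<Rightarrow> 'a sqmat" where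
  "word_eval r a [] = mat_one r"
| "word_eval r a (x # w) = mat_mul r (a x) (word_eval r a w)"

definition nc_eval :: "nat \<Rightarrow> (nat list \<Rightarrow> 'a::comm_ring_1) \<Rightarrow> (nat \<Rightarrow> 'a sqmat) \<Rightarrow> 'a sqmat" where
  "nc_eval r c a = (\<lambda>i j. \<Sum>w\<in>{w. c w \<noteq> 0}. c w * word_eval r a w i j)"

definition poly_image :: "nat \<Rightarrow> (nat list \<Rightarrow> 'a::comm_ring_1) \<Rightarrow> nat \<Rightarrow> 'a sqmat set" where
  "poly_image m c r = {nc_eval r c a | a. \<forall>i<m. a i \<in> upper_tri r}"

definition has_ord :: "nat \<Rightarrow> (nat list \<Rightarrow> 'a::comm_ring_1) \<Rightarrow> nat \<Rightarrow> bool" where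
  "has_ord m c s \<longleftrightarrow>
     (0 < s \<and> poly_image m c s = {mat_zero} \<and> poly_image m c (Suc s) \<noteq> {mat_zero}) \<and>
     (\<forall>r. 0 < r \<and> r < s \<longrightarrow> \<not> (poly_image m c r = {mat_zero} \<and> poly_image m c (Suc r) \<noteq> {mat_zero}))"

end

theory Submission
  imports Defs "HOL-Computational_Algebra.Polynomial"
begin

text \<open>Let s = n - 2. Restriction to a diagonal block of size s is multiplicative on upper
  triangular matrices, so p(T_s) = 0 kills every entry of p(T_n) lying in such a block, i.e. on
  the first s diagonals; only the three entries of T_n^(n-3) survive. Conversely p(T_(s+1)) \<noteq> 0
  yields a value \<alpha> E_(1,s+1), and embedding T_(s+1) into T_(s+2) along the increasing maps that
  omit one index produces \<alpha> times each of the three matrix units of T_n^(n-3). The image of p is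
  stable under conjugation by invertible upper triangular matrices: diagonal ones rescale the
  three entries, transvections add multiples of the first two entries to the corner entry.
  This reaches everything once a value with both of the first two entries nonzero is found,
  which an infinite field provides.\<close>

lemma mat_mul_eq_0_outside: "\<not> (i < r \<and> j < r) \<Longrightarrow> mat_mul r A B i j = 0"
  by (auto simp: mat_mul_def)

lemma mat_mul_assoc: "mat_mul r (mat_mul r A B) C = mat_mul r A (mat_mul r B C)"
proof (intro ext)
  fix i j
  show "mat_mul r (mat_mul r A B) C i j = mat_mul r A (mat_mul r B C) i j"
  proof (cases "i < r \<and> j < r")
    case True
    have "mat_mul r (mat_mul r A B) C i j = (\<Sum>l<r. \<Sum>k<r. A i k * B k l * C l j)"
      using True by (auto simp: mat_mul_def sum_distrib_right intro!: sum.cong)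
    also have "\<dots> = (\<Sum>k<r. \<Sum>l<r. A i k * B k l * C l j)"
      by (rule sum.swap)
    also have "\<dots> = mat_mul r A (mat_mul r B C) i j"
      using True by (auto simp: mat_mul_def sum_distrib_left mult.assoc intro!: sum.cong)
    finally show ?thesis .
  qed (simp add: mat_mul_eq_0_outside)
qed

lemma mat_mul_one_right: "mat_mul r A (mat_one r) = (\<lambda>i j. if i < r \<and> j < r then A i j else 0)"
  by (auto simp: mat_mul_def mat_one_def if_distrib cong: if_cong intro!: ext)

lemma mat_mul_one_left: "mat_mul r (mat_one r) A = (\<lambda>i j. if i < r \<and> j < r then A i j else 0)"
  by (auto simp: mat_mul_def mat_one_def if_distrib if_distribR cong: if_cong intro!: ext)

lemma mat_mul_sum_right:
  "mat_mul r A (\<lambda>i j. \<Sum>w\<in>S. f w * M w i j) = (\<lambda>i j. \<Sum>w\<in>S. f w * mat_mul r A (M w) i j)"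
  by (auto simp: mat_mul_def sum_distrib_left mult.left_commute intro!: ext sum.swap)

lemma mat_mul_sum_left:
  "mat_mul r (\<lambda>i j. \<Sum>w\<in>S. f w * M w i j) A = (\<lambda>i j. \<Sum>w\<in>S. f w * mat_mul r (M w) A i j)"
  by (auto simp: mat_mul_def sum_distrib_left sum_distrib_right mult.assoc intro!: ext sum.swap)

lemma upper_triD: "A \<in> upper_tri r \<Longrightarrow> r \<le> i \<or> r \<le> j \<or> j < i \<Longrightarrow> A i j = 0"
  unfolding upper_tri_def by blast

lemma mat_mul_upper_tri:
  assumes A: "A \<in> upper_tri r" and B: "B \<in> upper_tri r"
  shows "mat_mul r A B \<in> upper_tri r"
  unfolding upper_tri_def
proof clarify
  fix i j assume ij: "r \<le> i \<or> r \<le> j \<or> j < i"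
  have "A i k * B k j = 0" if "j < i" for k
    using upper_triD[OF A, of i k] upper_triD[OF B, of k j] that by (cases "k < i") auto
  then show "mat_mul r A B i j = 0"
    using ij by (auto simp: mat_mul_def)
qed

lemma mat_one_upper_tri: "mat_one r \<in> upper_tri r"
  by (auto simp: upper_tri_def mat_one_def)

lemma word_eval_upper_tri: "\<forall>x\<in>set w. a x \<in> upper_tri r \<Longrightarrow> word_eval r a w \<in> upper_tri r"
  by (induction w) (auto intro: mat_mul_upper_tri mat_one_upper_tri)

lemma nc_eval_upper_tri:
  assumes "nc_poly m c" "\<forall>k<m. a k \<in> upper_tri r"
  shows "nc_eval r c a \<in> upper_tri r"
  unfolding upper_tri_def nc_eval_def
proof clarify
  fix i j assume ij: "r \<le> i \<or> r \<le> j \<or> j < i"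
  have "word_eval r a w i j = 0" if "c w \<noteq> 0" for w
    using assms that ij by (intro upper_triD[OF word_eval_upper_tri]) (auto simp: nc_poly_def)
  then show "(\<Sum>w | c w \<noteq> 0. c w * word_eval r a w i j) = 0"
    by simp
qed

lemma nc_eval_in_poly_image: "\<forall>k<m. a k \<in> upper_tri r \<Longrightarrow> nc_eval r c a \<in> poly_image m c r"
  unfolding poly_image_def by blast

lemma mat_zero_in_poly_image:
  assumes "c [] = 0"
  shows "mat_zero \<in> poly_image m c r"
proof -
  have "c w * word_eval r (\<lambda>_. mat_zero) w i j = 0" for w i j
    using assms by (cases w) (auto simp: mat_mul_def mat_zero_def)
  then have "nc_eval r c (\<lambda>_. mat_zero) = mat_zero"
    by (simp add: nc_eval_def mat_zero_def)
  moreover have "mat_zero \<in> upper_tri r"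
    by (simp add: upper_tri_def mat_zero_def)
  ultimately show ?thesis
    using nc_eval_in_poly_image[of m "\<lambda>_. mat_zero" r c] by metis
qed

definition diag_block :: "nat \<Rightarrow> nat \<Rightarrow> 'a::comm_ring_1 sqmat \<Rightarrow> 'a sqmat" where
  "diag_block L s A = (\<lambda>i j. if i < s \<and> j < s then A (i + L) (j + L) else 0)"

lemma diag_block_upper_tri: "A \<in> upper_tri r \<Longrightarrow> diag_block L s A \<in> upper_tri s"
  by (auto simp: upper_tri_def diag_block_def)

lemma mat_mul_diag_block:
  assumes A: "A \<in> upper_tri r" and B: "B \<in> upper_tri r" and "L + s \<le> r" "i < s" "j < s"
  shows "mat_mul r A B (i + L) (j + L) = (\<Sum>l<s. A (i + L) (l + L) * B (l + L) (j + L))"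
proof -
  have "mat_mul r A B (i + L) (j + L) = (\<Sum>l<r. A (i + L) l * B l (j + L))"
    using assms by (simp add: mat_mul_def)
  also have "\<dots> = (\<Sum>l\<in>{L..<L + s}. A (i + L) l * B l (j + L))"
  proof (rule sum.mono_neutral_right)
    show "\<forall>l\<in>{..<r} - {L..<L + s}. A (i + L) l * B l (j + L) = 0"
      using upper_triD[OF A, of "i + L"] upper_triD[OF B, of _ "j + L"] \<open>j < s\<close> by force
  qed (use assms in auto)
  also have "\<dots> = (\<Sum>l<s. A (i + L) (l + L) * B (l + L) (j + L))"
    using sum.shift_bounds_nat_ivl[of "\<lambda>l. A (i + L) l * B l (j + L)" 0 L s]
    by (simp add: atLeast0LessThan add.commute)
  finally show ?thesis .
qed

lemma word_eval_diag_block: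
  assumes "\<forall>x\<in>set w. a x \<in> upper_tri r" "L + s \<le> r" "i < s" "j < s"
  shows "word_eval r a w (i + L) (j + L) = word_eval s (\<lambda>x. diag_block L s (a x)) w i j"
  using assms
proof (induction w arbitrary: i j)
  case Nil
  then show ?case by (auto simp: mat_one_def)
next
  case (Cons x w)
  have "word_eval r a (x # w) (i + L) (j + L)
      = (\<Sum>l<s. a x (i + L) (l + L) * word_eval r a w (l + L) (j + L))"
    using Cons.prems by (simp add: mat_mul_diag_block word_eval_upper_tri)
  also have "\<dots> = word_eval s (\<lambda>x. diag_block L s (a x)) (x # w) i j"
    using Cons by (auto simp: mat_mul_def diag_block_def intro!: sum.cong)
  finally show ?case .
qed

lemma nc_eval_diag_block_eq_0:
  assumes "nc_poly m c" "poly_image m c s = {mat_zero}" "\<forall>k<m. a k \<in> upper_tri r"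
    "L + s \<le> r" "L \<le> i" "i < L + s" "L \<le> j" "j < L + s"
  shows "nc_eval r c a i j = 0"
proof -
  define b where "b k = diag_block L s (a k)" for k
  have b: "\<forall>k<m. b k \<in> upper_tri s"
    unfolding b_def using assms(3) diag_block_upper_tri by blast
  have "c w * word_eval r a w i j = c w * word_eval s b w (i - L) (j - L)" for w
  proof (cases "c w = 0")
    case False
    then have "\<forall>x\<in>set w. a x \<in> upper_tri r"
      using assms(1,3) by (auto simp: nc_poly_def)
    then show ?thesis
      using word_eval_diag_block[of w a r L s "i - L" "j - L"] assms(4-8)
      unfolding b_def by simp
  qed simp
  then have "nc_eval r c a i j = nc_eval s c b (i - L) (j - L)"
    by (simp add: nc_eval_def)
  moreover have "nc_eval s c b = mat_zero"
    using assms(2) nc_eval_in_poly_image[OF b] by blast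
  ultimately show ?thesis
    by (simp add: mat_zero_def)
qed

lemma nc_eval_in_upper_tri_t:
  assumes "nc_poly m c" "poly_image m c s = {mat_zero}" "0 < s" "s \<le> r"
    "\<forall>k<m. a k \<in> upper_tri r"
  shows "nc_eval r c a \<in> upper_tri_t r (s - 1)"
  unfolding upper_tri_t_def
proof (intro CollectI conjI allI impI)
  show U: "nc_eval r c a \<in> upper_tri r"
    using nc_eval_upper_tri assms(1,5) by blast
  fix i j assume ij: "j \<le> i + (s - 1)"
  show "nc_eval r c a i j = 0"
  proof (cases "i < r \<and> j < r \<and> i \<le> j")
    case True
    show ?thesis
      by (rule nc_eval_diag_block_eq_0[OF assms(1,2,5), of "min i (r - s)"])
         (use True ij assms(3,4) in auto)
  qed (use upper_triD[OF U, of i j] in auto)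
qed

definition mat_unit :: "nat \<Rightarrow> nat \<Rightarrow> 'a::zero \<Rightarrow> 'a sqmat" where
  "mat_unit i j x = (\<lambda>k l. if k = i \<and> l = j then x else 0)"

definition mat_embed :: "nat \<Rightarrow> (nat \<Rightarrow> nat) \<Rightarrow> 'a::comm_ring_1 sqmat \<Rightarrow> 'a sqmat" where
  "mat_embed k \<sigma> A = (\<lambda>i j. if i \<in> \<sigma> ` {..<k} \<and> j \<in> \<sigma> ` {..<k}
      then A (inv_into {..<k} \<sigma> i) (inv_into {..<k} \<sigma> j) else 0)"

lemma mat_embed_apply:
  "inj_on \<sigma> {..<k} \<Longrightarrow> a < k \<Longrightarrow> b < k \<Longrightarrow> mat_embed k \<sigma> A (\<sigma> a) (\<sigma> b) = A a b"
  by (simp add: mat_embed_def inv_into_f_f)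

lemma mat_embed_eq_0: "i \<notin> \<sigma> ` {..<k} \<or> j \<notin> \<sigma> ` {..<k} \<Longrightarrow> mat_embed k \<sigma> A i j = 0"
  by (auto simp: mat_embed_def)

lemma mat_embed_eq_0_outside:
  "\<sigma> ` {..<k} \<subseteq> {..<r} \<Longrightarrow> \<not> (i < r \<and> j < r) \<Longrightarrow> mat_embed k \<sigma> A i j = 0"
  by (rule mat_embed_eq_0) auto

lemma mat_embed_cong:
  assumes "\<And>a b. a < k \<Longrightarrow> b < k \<Longrightarrow> A a b = B a b"
  shows "mat_embed k \<sigma> A = mat_embed k \<sigma> B"
proof -
  have "inv_into {..<k} \<sigma> (\<sigma> a) < k" if "a < k" for a
    using that by (metis inv_into_into image_eqI lessThan_iff)
  then show ?thesis
    by (auto simp: mat_embed_def intro!: ext assms)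
qed

lemma mat_embed_mul:
  assumes inj: "inj_on \<sigma> {..<k}" and sub: "\<sigma> ` {..<k} \<subseteq> {..<r}"
  shows "mat_mul r (mat_embed k \<sigma> A) (mat_embed k \<sigma> B) = mat_embed k \<sigma> (mat_mul k A B)"
proof (intro ext)
  fix i j
  show "mat_mul r (mat_embed k \<sigma> A) (mat_embed k \<sigma> B) i j = mat_embed k \<sigma> (mat_mul k A B) i j"
  proof (cases "i \<in> \<sigma> ` {..<k} \<and> j \<in> \<sigma> ` {..<k}")
    case True
    then obtain a b where ab: "a < k" "b < k" "i = \<sigma> a" "j = \<sigma> b" by auto
    then have "i < r" "j < r" using sub by auto
    then have "mat_mul r (mat_embed k \<sigma> A) (mat_embed k \<sigma> B) i j
        = (\<Sum>l\<in>\<sigma> ` {..<k}. mat_embed k \<sigma> A i l * mat_embed k \<sigma> B l j)"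
      unfolding mat_mul_def using sub by (auto intro!: sum.mono_neutral_right simp: mat_embed_eq_0)
    also have "\<dots> = (\<Sum>l<k. A a l * B l b)"
      using ab inj by (simp add: sum.reindex mat_embed_apply)
    also have "\<dots> = mat_embed k \<sigma> (mat_mul k A B) i j"
      using ab inj by (simp add: mat_embed_apply mat_mul_def)
    finally show ?thesis .
  qed (auto simp: mat_mul_def mat_embed_eq_0)
qed

lemma word_eval_mat_embed:
  assumes "inj_on \<sigma> {..<k}" "\<sigma> ` {..<k} \<subseteq> {..<r}" "w \<noteq> []"
  shows "word_eval r (\<lambda>x. mat_embed k \<sigma> (a x)) w = mat_embed k \<sigma> (word_eval k a w)"
  using assms(3)
proof (induction w)
  case (Cons x w)
  show ?case
  proof (cases "w = []")
    case True
    have "mat_mul r (mat_embed k \<sigma> (a x)) (mat_one r) = mat_embed k \<sigma> (a x)"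
      by (auto simp: mat_mul_one_right intro!: ext intro: mat_embed_eq_0_outside[OF assms(2)])
    also have "\<dots> = mat_embed k \<sigma> (mat_mul k (a x) (mat_one k))"
      by (rule mat_embed_cong) (simp add: mat_mul_one_right)
    finally show ?thesis using True by simp
  qed (use Cons mat_embed_mul[OF assms(1,2)] in simp)
qed simp

lemma nc_eval_mat_embed:
  assumes "inj_on \<sigma> {..<k}" "\<sigma> ` {..<k} \<subseteq> {..<r}" "c [] = 0"
  shows "nc_eval r c (\<lambda>x. mat_embed k \<sigma> (a x)) = mat_embed k \<sigma> (nc_eval k c a)"
proof -
  have "word_eval r (\<lambda>x. mat_embed k \<sigma> (a x)) w = mat_embed k \<sigma> (word_eval k a w)"
    if "c w \<noteq> 0" for w
    using that assms by (intro word_eval_mat_embed) auto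
  then show ?thesis
    by (auto simp: nc_eval_def mat_embed_def intro!: ext sum.cong)
qed

lemma mat_embed_upper_tri:
  assumes "strict_mono \<sigma>" "\<sigma> ` {..<k} \<subseteq> {..<r}" "A \<in> upper_tri k"
  shows "mat_embed k \<sigma> A \<in> upper_tri r"
  unfolding upper_tri_def
proof clarify
  fix i j assume ij: "r \<le> i \<or> r \<le> j \<or> j < i"
  show "mat_embed k \<sigma> A i j = 0"
  proof (cases "i \<in> \<sigma> ` {..<k} \<and> j \<in> \<sigma> ` {..<k}")
    case True
    then obtain a b where ab: "a < k" "b < k" "i = \<sigma> a" "j = \<sigma> b" by auto
    then have "b < a"
      using ij assms(1,2) by (auto simp: strict_mono_less)
    then show ?thesis
      unfolding ab(3,4) mat_embed_apply[OF strict_mono_imp_inj_on[OF assms(1)] ab(1,2)]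
      using upper_triD[OF assms(3)] by blast
  qed (simp add: mat_embed_eq_0)
qed

lemma mat_embed_unit:
  assumes "inj_on \<sigma> {..<k}" "a < k" "b < k"
  shows "mat_embed k \<sigma> (mat_unit a b x) = mat_unit (\<sigma> a) (\<sigma> b) x"
  using assms by (auto simp: mat_embed_def mat_unit_def inv_into_f_f intro!: ext
      dest: inj_onD[OF assms(1)])

lemma mat_mul_one_right_cancel: "mat_mul r A (mat_mul r B (mat_one r)) = mat_mul r A B"
  unfolding mat_mul_one_right by (auto simp: mat_mul_def intro!: ext sum.cong)

lemma mat_mul_cancel_left:
  assumes "mat_mul r H G = mat_one r"
  shows "mat_mul r H (mat_mul r G (mat_mul r A B)) = mat_mul r A B"
proof -
  have "mat_mul r H (mat_mul r G (mat_mul r A B)) = mat_mul r (mat_one r) (mat_mul r A B)"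
    by (simp add: mat_mul_assoc[symmetric] assms)
  then show ?thesis
    by (simp add: mat_mul_one_left mat_mul_eq_0_outside fun_eq_iff)
qed

lemma word_eval_conj:
  assumes HG: "mat_mul r H G = mat_one r" and "w \<noteq> []"
  shows "word_eval r (\<lambda>k. mat_mul r (mat_mul r G (a k)) H) w
       = mat_mul r (mat_mul r G (word_eval r a w)) H"
  using assms(2)
proof (induction w)
  case (Cons x w)
  show ?case
  proof (cases "w = []")
    case True
    have "mat_mul r (mat_mul r (mat_mul r G (a x)) H) (mat_one r) = mat_mul r (mat_mul r G (a x)) H"
      by (simp add: mat_mul_one_right mat_mul_eq_0_outside fun_eq_iff)
    then show ?thesis
      using True by (simp add: mat_mul_one_right_cancel)
  next
    case False
    with Cons.IH show ?thesis
      by (simp add: mat_mul_assoc mat_mul_cancel_left[OF HG])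
  qed
qed simp

lemma poly_image_conj:
  assumes "c [] = 0" "P \<in> poly_image m c r" "G \<in> upper_tri r" "H \<in> upper_tri r"
    and HG: "mat_mul r H G = mat_one r"
  shows "mat_mul r (mat_mul r G P) H \<in> poly_image m c r"
proof -
  obtain a where a: "\<forall>k<m. a k \<in> upper_tri r" and P: "P = nc_eval r c a"
    using assms(2) unfolding poly_image_def by blast
  have "word_eval r (\<lambda>k. mat_mul r (mat_mul r G (a k)) H) w
      = mat_mul r (mat_mul r G (word_eval r a w)) H" if "c w \<noteq> 0" for w
    using that assms(1) by (intro word_eval_conj[OF HG]) auto
  then have "nc_eval r c (\<lambda>k. mat_mul r (mat_mul r G (a k)) H) = mat_mul r (mat_mul r G P) H"
    unfolding P nc_eval_def mat_mul_sum_right mat_mul_sum_left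
    by (auto intro!: ext sum.cong)
  moreover have "\<forall>k<m. mat_mul r (mat_mul r G (a k)) H \<in> upper_tri r"
    using a assms(3,4) by (auto intro!: mat_mul_upper_tri)
  ultimately show ?thesis
    using nc_eval_in_poly_image by metis
qed

definition diag_mat :: "nat \<Rightarrow> (nat \<Rightarrow> 'a) \<Rightarrow> 'a::comm_ring_1 sqmat" where
  "diag_mat r d = (\<lambda>i j. if i < r \<and> j < r \<and> i = j then d i else 0)"

lemma mat_mul_diag_left: "mat_mul r (diag_mat r d) A i j = (if i < r \<and> j < r then d i * A i j else 0)"
  by (simp add: mat_mul_def diag_mat_def if_distrib if_distribR cong: if_cong)

lemma mat_mul_diag_right: "mat_mul r A (diag_mat r d) i j = (if i < r \<and> j < r then A i j * d j else 0)"
  by (simp add: mat_mul_def diag_mat_def if_distrib if_distribR cong: if_cong)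

lemma diag_mat_upper_tri: "diag_mat r d \<in> upper_tri r"
  by (auto simp: diag_mat_def upper_tri_def)

lemma diag_mat_inverse:
  "\<forall>i. d i \<noteq> 0 \<Longrightarrow> mat_mul r (diag_mat r (\<lambda>i. inverse (d i :: 'a::field))) (diag_mat r d) = mat_one r"
  unfolding mat_mul_diag_left by (auto simp: diag_mat_def mat_one_def fun_eq_iff)

definition transvection :: "nat \<Rightarrow> nat \<Rightarrow> nat \<Rightarrow> 'a \<Rightarrow> 'a::comm_ring_1 sqmat" where
  "transvection r u v t = (\<lambda>i j. mat_one r i j + (if i = u \<and> j = v then t else 0))"

lemma mat_mul_transvection_left:
  assumes "u < r" "v < r"
  shows "mat_mul r (transvection r u v t) A i j
       = (if i < r \<and> j < r then A i j + (if i = u then t * A v j else 0) else 0)"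
proof (cases "i < r \<and> j < r")
  case True
  then show ?thesis
    using assms by (simp add: mat_mul_def transvection_def mat_one_def distrib_right sum.distrib
        if_distrib[of "\<lambda>x. x * _"] cong: if_cong)
qed (auto simp: mat_mul_eq_0_outside)

lemma mat_mul_transvection_right:
  assumes "u < r" "v < r"
  shows "mat_mul r A (transvection r u v t) i j
       = (if i < r \<and> j < r then A i j + (if j = v then A i u * t else 0) else 0)"
proof (cases "i < r \<and> j < r")
  case True
  then show ?thesis
    using assms by (simp add: mat_mul_def transvection_def mat_one_def distrib_left sum.distrib
        if_distrib[of "\<lambda>x. _ * x"] cong: if_cong)
qed (auto simp: mat_mul_eq_0_outside)

lemma transvection_upper_tri: "u < v \<Longrightarrow> v < r \<Longrightarrow> transvection r u v t \<in> upper_tri r"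
  by (auto simp: transvection_def upper_tri_def mat_one_def)

lemma transvection_inverse:
  assumes "u < v" "v < r"
  shows "mat_mul r (transvection r u v (- t)) (transvection r u v t) = mat_one r"
  unfolding mat_mul_transvection_left[OF order.strict_trans[OF assms] assms(2)]
  using assms by (auto simp: transvection_def mat_one_def fun_eq_iff)

definition mat_poly_eval :: "'a::comm_ring_1 poly sqmat \<Rightarrow> 'a \<Rightarrow> 'a sqmat" where
  "mat_poly_eval A t = (\<lambda>i j. poly (A i j) t)"

lemma mat_poly_eval_mul: "mat_poly_eval (mat_mul r A B) t = mat_mul r (mat_poly_eval A t) (mat_poly_eval B t)"
  by (auto simp: mat_poly_eval_def mat_mul_def poly_sum intro!: ext)

lemma mat_poly_eval_one: "mat_poly_eval (mat_one r) t = mat_one r"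
  by (auto simp: mat_poly_eval_def mat_one_def intro!: ext)

lemma word_eval_mat_poly_eval:
  "mat_poly_eval (word_eval r A w) t = word_eval r (\<lambda>x. mat_poly_eval (A x) t) w"
  by (induction w) (auto simp: mat_poly_eval_mul mat_poly_eval_one)

lemma nc_eval_mat_poly_eval:
  "mat_poly_eval (nc_eval r (\<lambda>w. [:c w:]) A) t = nc_eval r c (\<lambda>x. mat_poly_eval (A x) t)"
  by (auto simp: mat_poly_eval_def nc_eval_def poly_sum intro!: ext sum.cong
      simp flip: word_eval_mat_poly_eval[unfolded mat_poly_eval_def])

lemma nc_eval_line_entry_poly:
  obtains q where "\<And>t. poly q t = nc_eval r c (\<lambda>x u v. A x u v + t * (B x u v - A x u v)) i j"
proof
  fix t
  define L where "L x u v = [:A x u v, B x u v - A x u v:]" for x u v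
  have "(\<lambda>x. mat_poly_eval (L x) t) = (\<lambda>x u v. A x u v + t * (B x u v - A x u v))"
    by (simp add: mat_poly_eval_def L_def)
  then show "poly (nc_eval r (\<lambda>w. [:c w:]) L i j) t
      = nc_eval r c (\<lambda>x u v. A x u v + t * (B x u v - A x u v)) i j"
    using fun_cong[OF fun_cong[OF nc_eval_mat_poly_eval[of r c L t]], of i j]
    by (simp add: mat_poly_eval_def)
qed

lemma nc_eval_line_entries_nonzero:
  fixes A B :: "nat \<Rightarrow> 'a::idom sqmat"
  assumes "infinite (UNIV :: 'a set)" "nc_eval r c A i j \<noteq> 0" "nc_eval r c B k l \<noteq> 0"
  obtains t where "nc_eval r c (\<lambda>x u v. A x u v + t * (B x u v - A x u v)) i j \<noteq> 0"
    and "nc_eval r c (\<lambda>x u v. A x u v + t * (B x u v - A x u v)) k l \<noteq> 0"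
proof -
  obtain q1 where q1: "\<And>t. poly q1 t = nc_eval r c (\<lambda>x u v. A x u v + t * (B x u v - A x u v)) i j"
    using nc_eval_line_entry_poly by blast
  obtain q2 where q2: "\<And>t. poly q2 t = nc_eval r c (\<lambda>x u v. A x u v + t * (B x u v - A x u v)) k l"
    using nc_eval_line_entry_poly by blast
  have "poly q1 0 \<noteq> 0" "poly q2 1 \<noteq> 0"
    using assms(2,3) by (simp_all add: q1 q2)
  then have "q1 \<noteq> 0" "q2 \<noteq> 0" by auto
  then have "finite ({t. poly q1 t = 0} \<union> {t. poly q2 t = 0})"
    by (simp add: poly_roots_finite)
  then obtain t where "t \<notin> {t. poly q1 t = 0} \<union> {t. poly q2 t = 0}"
    using ex_new_if_finite[OF assms(1)] by blast
  then show ?thesis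
    using that by (simp add: q1 q2) blast
qed

lemma nc_eval_mat_embed_unit:
  assumes "c [] = 0" "inj_on \<sigma> {..<k}" "\<sigma> ` {..<k} \<subseteq> {..<r}" "i < k" "j < k"
    and "nc_eval k c a = mat_unit i j x"
  shows "nc_eval r c (\<lambda>y. mat_embed k \<sigma> (a y)) = mat_unit (\<sigma> i) (\<sigma> j) x"
  using assms by (simp add: nc_eval_mat_embed mat_embed_unit)

lemma upper_tri_t_Suc_eq_unit:
  assumes "A \<in> upper_tri_t (Suc s) (s - 1)"
  shows "A = mat_unit 0 s (A 0 s)"
proof (intro ext)
  fix i j
  have "A i j = 0" if "\<not> (i = 0 \<and> j = s)"
    using assms that unfolding upper_tri_t_def upper_tri_def
    by (cases "j \<le> i + (s - 1)"; cases "Suc s \<le> j") auto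
  then show "A i j = mat_unit 0 s (A 0 s) i j"
    by (auto simp: mat_unit_def)
qed

text \<open>With n = s + 2, the entries (0, s), (1, s + 1) and (0, s + 1) are the positions
  (1, n - 1), (2, n) and (1, n) of the paper in 0-based indexing.\<close>
definition corner :: "nat \<Rightarrow> 'a \<Rightarrow> 'a \<Rightarrow> 'a \<Rightarrow> 'a::zero sqmat" where
  "corner s x y z = (\<lambda>i j. if i = 0 \<and> j = s then x else if i = 1 \<and> j = Suc s then y
      else if i = 0 \<and> j = Suc s then z else 0)"

lemma upper_tri_t_eq_corner:
  assumes "A \<in> upper_tri_t (Suc (Suc s)) (s - 1)" "2 \<le> s"
  shows "A = corner s (A 0 s) (A 1 (Suc s)) (A 0 (Suc s))"
proof (intro ext)
  fix i j
  have "A i j = 0" if "\<not> (i = 0 \<and> j = s)" "\<not> (i = 1 \<and> j = Suc s)" "\<not> (i = 0 \<and> j = Suc s)"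
    using assms that unfolding upper_tri_t_def upper_tri_def
    by (cases "j \<le> i + (s - 1)"; cases "Suc (Suc s) \<le> j") auto
  then show "A i j = corner s (A 0 s) (A 1 (Suc s)) (A 0 (Suc s)) i j"
    using assms(2) by (auto simp: corner_def)
qed

lemma corner_scale:
  fixes x y z u v :: "'a::field"
  assumes "c [] = 0" "2 \<le> s" "corner s x y z \<in> poly_image m c (Suc (Suc s))" "u \<noteq> 0" "v \<noteq> 0"
  shows "corner s (u * x) (v * y) (u * v * z) \<in> poly_image m c (Suc (Suc s))"
proof -
  define d where "d i = (if i = 0 then u else if i = Suc s then inverse v else 1)" for i
  let ?G = "diag_mat (Suc (Suc s)) d" and ?H = "diag_mat (Suc (Suc s)) (\<lambda>i. inverse (d i))"
  have "\<forall>i. d i \<noteq> 0"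
    using assms(4,5) by (simp add: d_def)
  then have "mat_mul (Suc (Suc s)) (mat_mul (Suc (Suc s)) ?G (corner s x y z)) ?H
      \<in> poly_image m c (Suc (Suc s))"
    by (intro poly_image_conj assms(1,3) diag_mat_upper_tri diag_mat_inverse)
  moreover have "mat_mul (Suc (Suc s)) (mat_mul (Suc (Suc s)) ?G (corner s x y z)) ?H
      = corner s (u * x) (v * y) (u * v * z)"
    using assms(2) by (auto simp: mat_mul_diag_left mat_mul_diag_right corner_def d_def fun_eq_iff)
  ultimately show ?thesis by simp
qed

lemma corner_shear_first_row:
  assumes "c [] = 0" "2 \<le> s" "corner s x y z \<in> poly_image m c (Suc (Suc s))"
  shows "corner s x y (z + t * y) \<in> poly_image m c (Suc (Suc s))"
proof -
  let ?G = "transvection (Suc (Suc s)) 0 1 t" and ?H = "transvection (Suc (Suc s)) 0 1 (- t)"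
  have "mat_mul (Suc (Suc s)) (mat_mul (Suc (Suc s)) ?G (corner s x y z)) ?H
      \<in> poly_image m c (Suc (Suc s))"
    by (intro poly_image_conj assms(1,3) transvection_upper_tri)
       (simp_all add: transvection_inverse)
  moreover have "mat_mul (Suc (Suc s)) (mat_mul (Suc (Suc s)) ?G (corner s x y z)) ?H
      = corner s x y (z + t * y)"
    using assms(2)
    by (auto simp: mat_mul_transvection_left mat_mul_transvection_right corner_def fun_eq_iff)
  ultimately show ?thesis by simp
qed

lemma corner_shear_last_column:
  assumes "c [] = 0" "2 \<le> s" "corner s x y z \<in> poly_image m c (Suc (Suc s))"
  shows "corner s x y (z + t * x) \<in> poly_image m c (Suc (Suc s))"
proof -
  let ?G = "transvection (Suc (Suc s)) s (Suc s) (- t)" and ?H = "transvection (Suc (Suc s)) s (Suc s) t"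
  have "mat_mul (Suc (Suc s)) (mat_mul (Suc (Suc s)) ?G (corner s x y z)) ?H
      \<in> poly_image m c (Suc (Suc s))"
    by (intro poly_image_conj assms(1,3) transvection_upper_tri)
       (simp_all add: transvection_inverse[of s "Suc s" _ "- t", simplified])
  moreover have "mat_mul (Suc (Suc s)) (mat_mul (Suc (Suc s)) ?G (corner s x y z)) ?H
      = corner s x y (z + t * x)"
    using assms(2)
    by (auto simp: mat_mul_transvection_left mat_mul_transvection_right corner_def fun_eq_iff)
  ultimately show ?thesis by simp
qed

lemma corner_rescale:
  fixes x y :: "'a::field"
  assumes "c [] = 0" "2 \<le> s" "corner s x' y' z' \<in> poly_image m c (Suc (Suc s))"
    and "x' = 0 \<longleftrightarrow> x = 0" "y' = 0 \<longleftrightarrow> y = 0"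
  obtains z where "corner s x y z \<in> poly_image m c (Suc (Suc s))"
proof -
  define u where "u = (if x' = 0 then 1 else x / x')"
  define v where "v = (if y' = 0 then 1 else y / y')"
  have "u \<noteq> 0" "v \<noteq> 0" "u * x' = x" "v * y' = y"
    using assms(4,5) by (auto simp: u_def v_def)
  then show ?thesis
    using corner_scale[OF assms(1-3)] that by metis
qed

lemma corner_axes_in_poly_image:
  assumes c0: "c [] = 0" and s2: "2 \<le> s"
    and a: "\<forall>k<m. a k \<in> upper_tri (Suc s)" and p: "nc_eval (Suc s) c a = mat_unit 0 s x"
  shows "corner s x 0 0 \<in> poly_image m c (Suc (Suc s))"
    and "corner s 0 x 0 \<in> poly_image m c (Suc (Suc s))"
    and "corner s 0 0 x \<in> poly_image m c (Suc (Suc s))"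
proof -
  have embedded: "mat_unit (\<sigma> 0) (\<sigma> s) x \<in> poly_image m c (Suc (Suc s))"
    if "strict_mono \<sigma>" "\<sigma> ` {..<Suc s} \<subseteq> {..<Suc (Suc s)}" for \<sigma>
  proof -
    have "\<forall>k<m. mat_embed (Suc s) \<sigma> (a k) \<in> upper_tri (Suc (Suc s))"
      using a mat_embed_upper_tri[OF that] by blast
    moreover have "nc_eval (Suc (Suc s)) c (\<lambda>k. mat_embed (Suc s) \<sigma> (a k)) = mat_unit (\<sigma> 0) (\<sigma> s) x"
      using that by (intro nc_eval_mat_embed_unit[OF c0 _ _ _ _ p] strict_mono_imp_inj_on) auto
    ultimately show ?thesis
      using nc_eval_in_poly_image by metis
  qed
  define skip1 where "skip1 i = (if i = 0 then 0 else Suc i)" for i :: nat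
  have "mat_unit 0 s x \<in> poly_image m c (Suc (Suc s))"
    using embedded[of "\<lambda>i. i"] by (auto simp: strict_mono_def)
  moreover have "mat_unit (Suc 0) (Suc s) x \<in> poly_image m c (Suc (Suc s))"
    using embedded[of Suc] by (auto simp: strict_mono_def)
  moreover have "mat_unit (skip1 0) (skip1 s) x \<in> poly_image m c (Suc (Suc s))"
    by (rule embedded) (auto simp: strict_mono_def skip1_def)
  moreover have "corner s x 0 0 = mat_unit 0 s x" "corner s 0 x 0 = mat_unit (Suc 0) (Suc s) x"
    "corner s 0 0 x = mat_unit (skip1 0) (skip1 s) x"
    using s2 by (auto simp: corner_def mat_unit_def skip1_def fun_eq_iff)
  ultimately show "corner s x 0 0 \<in> poly_image m c (Suc (Suc s))"
    "corner s 0 x 0 \<in> poly_image m c (Suc (Suc s))"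
    "corner s 0 0 x \<in> poly_image m c (Suc (Suc s))"
    by simp_all
qed

context
  fixes c :: "nat list \<Rightarrow> 'a::field" and m s :: nat
  assumes nc: "nc_poly m c" and c0: "c [] = 0" and s2: "2 \<le> s"
    and vanishes: "poly_image m c s = {mat_zero}"
begin

lemma poly_image_eq_unit:
  assumes "poly_image m c (Suc s) \<noteq> {mat_zero}"
  obtains a x where "\<forall>k<m. a k \<in> upper_tri (Suc s)" "x \<noteq> 0" "nc_eval (Suc s) c a = mat_unit 0 s x"
proof -
  obtain P where P: "P \<in> poly_image m c (Suc s)" "P \<noteq> mat_zero"
    using assms mat_zero_in_poly_image[where c = c, OF c0] by blast
  then obtain a where a: "\<forall>k<m. a k \<in> upper_tri (Suc s)" and Pa: "P = nc_eval (Suc s) c a"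
    unfolding poly_image_def by blast
  have unit: "P = mat_unit 0 s (P 0 s)"
    unfolding Pa using s2 by (intro upper_tri_t_Suc_eq_unit nc_eval_in_upper_tri_t[OF nc vanishes _ _ a]) auto
  have "P 0 s \<noteq> 0"
  proof
    assume "P 0 s = 0"
    then have "P = mat_zero"
      by (subst unit) (simp add: mat_unit_def mat_zero_def)
    with P(2) show False ..
  qed
  with that a unit show ?thesis
    unfolding Pa by blast
qed

text \<open>The two embeddings of T_(s+1) into T_(s+2) as upper left and lower right corner put the
  witness at (0, s) and at (1, s + 1); a generic point on the line joining the two tuples of
  embedded matrices makes both entries nonzero at once.\<close>
lemma corner_generic_in_poly_image:
  assumes inf: "infinite (UNIV :: 'a set)"
    and a: "\<forall>k<m. a k \<in> upper_tri (Suc s)" and p: "nc_eval (Suc s) c a = mat_unit 0 s x" and "x \<noteq> 0"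
  obtains x' y' z' where "x' \<noteq> 0" "y' \<noteq> 0" "corner s x' y' z' \<in> poly_image m c (Suc (Suc s))"
proof -
  define A where "A k = mat_embed (Suc s) (\<lambda>i. i) (a k)" for k
  define B where "B k = mat_embed (Suc s) Suc (a k)" for k
  have "nc_eval (Suc (Suc s)) c A = mat_unit 0 s x"
    unfolding A_def by (rule nc_eval_mat_embed_unit[OF c0 _ _ _ _ p, simplified]) auto
  then have "nc_eval (Suc (Suc s)) c A 0 s \<noteq> 0"
    using \<open>x \<noteq> 0\<close> by (simp add: mat_unit_def)
  moreover have "nc_eval (Suc (Suc s)) c B = mat_unit 1 (Suc s) x"
    unfolding B_def One_nat_def by (rule nc_eval_mat_embed_unit[OF c0 _ _ _ _ p, simplified]) auto
  then have "nc_eval (Suc (Suc s)) c B 1 (Suc s) \<noteq> 0"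
    using \<open>x \<noteq> 0\<close> by (simp add: mat_unit_def)
  ultimately obtain t where
    t: "nc_eval (Suc (Suc s)) c (\<lambda>k u v. A k u v + t * (B k u v - A k u v)) 0 s \<noteq> 0"
       "nc_eval (Suc (Suc s)) c (\<lambda>k u v. A k u v + t * (B k u v - A k u v)) 1 (Suc s) \<noteq> 0"
    by (rule nc_eval_line_entries_nonzero[OF inf])
  define P where "P = nc_eval (Suc (Suc s)) c (\<lambda>k u v. A k u v + t * (B k u v - A k u v))"
  have "\<forall>k<m. A k \<in> upper_tri (Suc (Suc s)) \<and> B k \<in> upper_tri (Suc (Suc s))"
    using a unfolding A_def B_def by (auto intro!: mat_embed_upper_tri simp: strict_mono_def)
  then have line: "\<forall>k<m. (\<lambda>u v. A k u v + t * (B k u v - A k u v)) \<in> upper_tri (Suc (Suc s))"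
    by (auto simp: upper_tri_def)
  then have "P = corner s (P 0 s) (P 1 (Suc s)) (P 0 (Suc s))"
    unfolding P_def using s2
    by (intro upper_tri_t_eq_corner nc_eval_in_upper_tri_t[OF nc vanishes]) auto
  moreover have "P \<in> poly_image m c (Suc (Suc s))"
    unfolding P_def using line by (rule nc_eval_in_poly_image)
  ultimately have "corner s (P 0 s) (P 1 (Suc s)) (P 0 (Suc s)) \<in> poly_image m c (Suc (Suc s))"
    by simp
  with t show ?thesis
    unfolding P_def by (rule that)
qed

lemma corner_in_poly_image:
  assumes inf: "infinite (UNIV :: 'a set)" and nonzero: "poly_image m c (Suc s) \<noteq> {mat_zero}"
  shows "corner s x y z \<in> poly_image m c (Suc (Suc s))"
proof -
  obtain a w where a: "\<forall>k<m. a k \<in> upper_tri (Suc s)" and "w \<noteq> 0"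
    and p: "nc_eval (Suc s) c a = mat_unit 0 s w"
    using poly_image_eq_unit[OF nonzero] by blast
  note axes = corner_axes_in_poly_image[OF c0 s2 a p]
  obtain x0 y0 z0 where "x0 \<noteq> 0" "y0 \<noteq> 0" and generic: "corner s x0 y0 z0 \<in> poly_image m c (Suc (Suc s))"
    using corner_generic_in_poly_image[OF inf a p \<open>w \<noteq> 0\<close>] by blast
  show ?thesis
  proof (cases "x = 0 \<and> y = 0")
    case True
    show ?thesis
    proof (cases "z = 0")
      case True
      have "corner s 0 0 (0 :: 'a) = mat_zero"
        by (simp add: corner_def mat_zero_def fun_eq_iff)
      then show ?thesis
        using \<open>x = 0 \<and> y = 0\<close> True mat_zero_in_poly_image[where c = c, OF c0] by simp
    next
      case False
      then show ?thesis
        using \<open>x = 0 \<and> y = 0\<close> \<open>w \<noteq> 0\<close> corner_scale[OF c0 s2 axes(3), of "z / w" 1] by simp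
    qed
  next
    case False
    obtain z' where z': "corner s x y z' \<in> poly_image m c (Suc (Suc s))"
      using False \<open>w \<noteq> 0\<close> \<open>x0 \<noteq> 0\<close> \<open>y0 \<noteq> 0\<close> corner_rescale[OF c0 s2 generic, of x y]
        corner_rescale[OF c0 s2 axes(1), of x y] corner_rescale[OF c0 s2 axes(2), of x y]
      by (cases "x = 0"; cases "y = 0") auto
    show ?thesis
    proof (cases "x = 0")
      case True
      with False have "y \<noteq> 0" by simp
      then show ?thesis
        using corner_shear_first_row[OF c0 s2 z', of "(z - z') / y"] by simp
    next
      case False
      then show ?thesis
        using corner_shear_last_column[OF c0 s2 z', of "(z - z') / x"] by simp
    qed
  qed
qed

end

theorem lemma3p3:
  fixes c :: "nat list \<Rightarrow> 'a::field" and n m :: nat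
  assumes "4 \<le> n" and "1 \<le> m"
    and "infinite (UNIV :: 'a set)"
    and "nc_poly m c"
    and "c [] = 0"
    and "has_ord m c (n - 2)"
  shows "poly_image m c n = upper_tri_t n (n - 3)"
proof -
  define s where "s = n - 2"
  have n: "n = Suc (Suc s)" and "2 \<le> s" and n3: "n - 3 = s - 1"
    using assms(1) by (auto simp: s_def)
  have vanishes: "poly_image m c s = {mat_zero}" and nonzero: "poly_image m c (Suc s) \<noteq> {mat_zero}"
    using assms(6) unfolding has_ord_def s_def by simp_all
  show ?thesis
  proof (intro equalityI subsetI)
    fix P assume "P \<in> poly_image m c n"
    then obtain a where "\<forall>k<m. a k \<in> upper_tri n" "P = nc_eval n c a"
      unfolding poly_image_def by blast
    then show "P \<in> upper_tri_t n (n - 3)"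
      using nc_eval_in_upper_tri_t[OF assms(4) vanishes] \<open>2 \<le> s\<close> n n3 by simp
  next
    fix T :: "'a sqmat" assume "T \<in> upper_tri_t n (n - 3)"
    then have "T = corner s (T 0 s) (T 1 (Suc s)) (T 0 (Suc s))"
      using upper_tri_t_eq_corner \<open>2 \<le> s\<close> n n3 by simp
    also have "\<dots> \<in> poly_image m c n"
      using corner_in_poly_image[OF assms(4,5) \<open>2 \<le> s\<close> vanishes assms(3) nonzero] n by simp
    finally show "T \<in> poly_image m c n" .
  qed
qed

end
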